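(* Let $V$ be a standard $U_q(\widehat{\mathfrak{sl}}_2)$-module of diameter $1$ and let $W$ be any $U_q(\widehat{\mathfrak{sl}}_2)$-module. Then for every integer $n\ge1$, on $V\otimes W$: (i) $R^n$ acts as $1\otimes R^n+[n]_qR_n$, where $R_n=uq^{n-1}e_0^+\otimes R^{n-1}K_0+vq^{1-n}e_1^-K_1\otimes R^{n-1}K_1$; (ii) $L^n$ acts as $1\otimes L^n+[n]_qL_n$, where $L_n=u^*q^{1-n}e_1^+\otimes K_1L^{n-1}+v^*q^{n-1}e_0^-K_0\otimes K_0L^{n-1}$. (Here an element $X\otimes Y$ acts on $V\otimes W$ by $v\otimes w\mapsto Xv\otimes Yw$.)
   Context: Let $\mathbb F$ be an algebraically closed field and fix nonzero $q\in\mathbb F$ with $q^2\ne1$; write $[n]_q=(q^n-q^{-n})/(q-q^{-1})$. $U_q(\widehat{\mathfrak{sl}}_2)$ is the associative unital $\mathbb F$-algebra with generators $e_i^{\pm},K_i^{\pm1}$ ($i\in\{0,1\}$) and relations $K_iK_i^{-1}=K_i^{-1}K_i=1$, $K_0K_1=K_1K_0$, $K_ie_i^{\pm}K_i^{-1}=q^{\pm2}e_i^{\pm}$, $K_ie_j^{\pm}K_i^{-1}=q^{\mp2}e_j^{\pm}$ ($i\ne j$), $e_i^+e_i^--e_i^-e_i^+=(K_i-K_i^{-1})/(q-q^{-1})$, $e_0^{\pm}e_1^{\mp}=e_1^{\mp}e_0^{\pm}$, and $(e_i^\pm)^3e_j^\pm-[3]_q(e_i^\pm)^2e_j^\pm e_i^\pm+[3]_qe_i^\pm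 e_j^\pm(e_i^\pm)^2-e_j^\pm(e_i^\pm)^3=0$ ($i\ne j$). It is a Hopf algebra with comultiplication $\Delta(e_i^+)=e_i^+\otimes K_i+1\otimes e_i^+$, $\Delta(e_i^-)=e_i^-\otimes1+K_i^{-1}\otimes e_i^-$, $\Delta(K_i)=K_i\otimes K_i$, and the tensor product $V\otimes W$ of modules is a module via $z(v\otimes w)=\Delta(z)(v\otimes w)$. A standard module of diameter $1$ is a module $V(\alpha)$ ($\alpha\in\mathbb F$ nonzero) with basis $x,y$ and $K_1x=qx$, $K_1y=q^{-1}y$, $e_1^-x=y$, $e_1^-y=0$, $e_1^+x=0$, $e_1^+y=x$, $K_0x=q^{-1}x$, $K_0y=qy$, $e_0^-x=0$, $e_0^-y=q\alpha^{-1}x$, $e_0^+x=q^{-1}\alpha y$, $e_0^+y=0$. Fix nonzero $b,c,b^*,c^*\in\mathbb F$ and $u,v,u^*,v^*\in\mathbb F$ with $uv^*=-bb^*q^{-1}(q-q^{-1})^2$ and $vu^*=-cc^*q^{-1}(q-q^{-1})^2$; set $R=ue_0^++ve_1^-K_1$ and $L=u^*e_1^++v^*e_0^-K_0$ (and $R^0=L^0=1$). *)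

theory Defs
  imports Main "HOL-Computational_Algebra.Polynomial" "HOL-Library.Product_Plus"
begin

text \<open>Action of the generators e0+, e0-, e1+, e1-, K0, K0^-1, K1, K1^-1
  of U_q(sl2-hat) on a vector space (carrier type 'w).\<close>
record 'w uqmod =
  E0p :: "'w \<Rightarrow> 'w"
  E0m :: "'w \<Rightarrow> 'w"
  E1p :: "'w \<Rightarrow> 'w"
  E1m :: "'w \<Rightarrow> 'w"
  K0  :: "'w \<Rightarrow> 'w"
  K0i :: "'w \<Rightarrow> 'w"
  K1  :: "'w \<Rightarrow> 'w"
  K1i :: "'w \<Rightarrow> 'w"

definition qnum :: "'a::field \<Rightarrow> nat \<Rightarrow> 'a" where
  "qnum q n = (q ^ n - inverse q ^ n) / (q - inverse q)"

definition serre :: "('w::ab_group_add \<Rightarrow> 'w) \<Rightarrow> ('w \<Rightarrow> 'w) \<Rightarrow> ('a \<Rightarrow> 'w \<Rightarrow> 'w) \<Rightarrow> 'a \<Rightarrow> bool" where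
  "serre a b sc t \<longleftrightarrow> (\<forall>w. a (a (a (b w))) - sc t (a (a (b (a w)))) + sc t (a (b (a (a w)))) - b (a (a (a w))) = 0)"

definition is_uq_module :: "('a::field \<Rightarrow> 'w::ab_group_add \<Rightarrow> 'w) \<Rightarrow> 'a \<Rightarrow> 'w uqmod \<Rightarrow> bool" where
  "is_uq_module sc q W \<longleftrightarrow>
     (\<forall>f \<in> {E0p W, E0m W, E1p W, E1m W, K0 W, K0i W, K1 W, K1i W}. Vector_Spaces.linear sc sc f) \<and>
     K0 W \<circ> K0i W = id \<and> K0i W \<circ> K0 W = id \<and> K1 W \<circ> K1i W = id \<and> K1i W \<circ> K1 W = id \<and>
     K0 W \<circ> K1 W = K1 W \<circ> K0 W \<and>
     K0 W \<circ> E0p W \<circ> K0i W = (\<lambda>w. sc (q ^ 2) (E0p W w)) \<and>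
     K0 W \<circ> E0m W \<circ> K0i W = (\<lambda>w. sc (inverse q ^ 2) (E0m W w)) \<and>
     K1 W \<circ> E1p W \<circ> K1i W = (\<lambda>w. sc (q ^ 2) (E1p W w)) \<and>
     K1 W \<circ> E1m W \<circ> K1i W = (\<lambda>w. sc (inverse q ^ 2) (E1m W w)) \<and>
     K0 W \<circ> E1p W \<circ> K0i W = (\<lambda>w. sc (inverse q ^ 2) (E1p W w)) \<and>
     K0 W \<circ> E1m W \<circ> K0i W = (\<lambda>w. sc (q ^ 2) (E1m W w)) \<and>
     K1 W \<circ> E0p W \<circ> K1i W = (\<lambda>w. sc (inverse q ^ 2) (E0p W w)) \<and>
     K1 W \<circ> E0m W \<circ> K1i W = (\<lambda>w. sc (q ^ 2) (E0m W w)) \<and>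
     (\<forall>w. E0p W (E0m W w) - E0m W (E0p W w) = sc (inverse (q - inverse q)) (K0 W w - K0i W w)) \<and>
     (\<forall>w. E1p W (E1m W w) - E1m W (E1p W w) = sc (inverse (q - inverse q)) (K1 W w - K1i W w)) \<and>
     E0p W \<circ> E1m W = E1m W \<circ> E0p W \<and>
     E0m W \<circ> E1p W = E1p W \<circ> E0m W \<and>
     serre (E0p W) (E1p W) sc (qnum q 3) \<and> serre (E1p W) (E0p W) sc (qnum q 3) \<and>
     serre (E0m W) (E1m W) sc (qnum q 3) \<and> serre (E1m W) (E0m W) sc (qnum q 3)"

text \<open>The standard module V(alpha) of diameter 1, in coordinates: (a,b) stands for a x + b y.\<close>
definition stdV :: "'a::field \<Rightarrow> 'a \<Rightarrow> ('a \<times> 'a) uqmod" where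
  "stdV q \<alpha> = \<lparr> E0p = (\<lambda>(a,b). (0, inverse q * \<alpha> * a)),
                 E0m = (\<lambda>(a,b). (q * inverse \<alpha> * b, 0)),
                 E1p = (\<lambda>(a,b). (b, 0)),
                 E1m = (\<lambda>(a,b). (0, a)),
                 K0  = (\<lambda>(a,b). (inverse q * a, q * b)),
                 K0i = (\<lambda>(a,b). (q * a, inverse q * b)),
                 K1  = (\<lambda>(a,b). (q * a, inverse q * b)),
                 K1i = (\<lambda>(a,b). (inverse q * a, q * b)) \<rparr>"

text \<open>V (x) W is represented as W x W: the pair (w1,w2) stands for x(x)w1 + y(x)w2.
  tensor X Y is the operator v(x)w |-> Xv (x) Yw, X a linear operator on V in coordinates.\<close>
definition tensor :: "('a::field \<Rightarrow> 'w::ab_group_add \<Rightarrow> 'w) \<Rightarrow> ('a \<times> 'a \<Rightarrow> 'a \<times> 'a) \<Rightarrow> ('w \<Rightarrow> 'w) \<Rightarrow> ('w \<times> 'w \<Rightarrow> 'w \<times> 'w)" where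
  "tensor sc X Y = (\<lambda>(w1, w2). let (a, c) = X (1, 0); (b, d) = X (0, 1) in
       (sc a (Y w1) + sc b (Y w2), sc c (Y w1) + sc d (Y w2)))"

definition vwscale :: "('a \<Rightarrow> 'w \<Rightarrow> 'w) \<Rightarrow> 'a \<Rightarrow> 'w \<times> 'w \<Rightarrow> 'w \<times> 'w" where
  "vwscale sc c = (\<lambda>(w1, w2). (sc c w1, sc c w2))"

text \<open>Module structure on V (x) W via the comultiplication Delta.\<close>
definition tens_mod :: "('a::field \<Rightarrow> 'w::ab_group_add \<Rightarrow> 'w) \<Rightarrow> ('a \<times> 'a) uqmod \<Rightarrow> 'w uqmod \<Rightarrow> ('w \<times> 'w) uqmod" where
  "tens_mod sc V W = \<lparr>
     E0p = (\<lambda>p. tensor sc (E0p V) (K0 W) p + tensor sc id (E0p W) p),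
     E0m = (\<lambda>p. tensor sc (E0m V) id p + tensor sc (K0i V) (E0m W) p),
     E1p = (\<lambda>p. tensor sc (E1p V) (K1 W) p + tensor sc id (E1p W) p),
     E1m = (\<lambda>p. tensor sc (E1m V) id p + tensor sc (K1i V) (E1m W) p),
     K0  = tensor sc (K0 V) (K0 W),
     K0i = tensor sc (K0i V) (K0i W),
     K1  = tensor sc (K1 V) (K1 W),
     K1i = tensor sc (K1i V) (K1i W) \<rparr>"

definition Rop :: "('a \<Rightarrow> 'm::plus \<Rightarrow> 'm) \<Rightarrow> 'a \<Rightarrow> 'a \<Rightarrow> 'm uqmod \<Rightarrow> 'm \<Rightarrow> 'm" where
  "Rop sc u v M = (\<lambda>w. sc u (E0p M w) + sc v (E1m M (K1 M w)))"

definition Lop :: "('a \<Rightarrow> 'm::plus \<Rightarrow> 'm) \<Rightarrow> 'a \<Rightarrow> 'a \<Rightarrow> 'm uqmod \<Rightarrow> 'm \<Rightarrow> 'm" where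
  "Lop sc us vs M = (\<lambda>w. sc us (E1p M w) + sc vs (E0m M (K0 M w)))"

definition Rn :: "('a::field \<Rightarrow> 'w::ab_group_add \<Rightarrow> 'w) \<Rightarrow> 'a \<Rightarrow> 'a \<Rightarrow> 'a \<Rightarrow> ('a \<times> 'a) uqmod \<Rightarrow> 'w uqmod \<Rightarrow> nat \<Rightarrow> 'w \<times> 'w \<Rightarrow> 'w \<times> 'w" where
  "Rn sc q u v V W n = (\<lambda>p.
     vwscale sc (u * q ^ (n - 1)) (tensor sc (E0p V) ((Rop sc u v W ^^ (n - 1)) \<circ> K0 W) p)
   + vwscale sc (v * inverse q ^ (n - 1)) (tensor sc (E1m V \<circ> K1 V) ((Rop sc u v W ^^ (n - 1)) \<circ> K1 W) p))"

definition Ln :: "('a::field \<Rightarrow> 'w::ab_group_add \<Rightarrow> 'w) \<Rightarrow> 'a \<Rightarrow> 'a \<Rightarrow> 'a \<Rightarrow> ('a \<times> 'a) uqmod \<Rightarrow> 'w uqmod \<Rightarrow> nat \<Rightarrow> 'w \<times> 'w \<Rightarrow> 'w \<times> 'w" where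
  "Ln sc q us vs V W n = (\<lambda>p.
     vwscale sc (us * inverse q ^ (n - 1)) (tensor sc (E1p V) (K1 W \<circ> (Lop sc us vs W ^^ (n - 1))) p)
   + vwscale sc (vs * q ^ (n - 1)) (tensor sc (E0m V \<circ> K0 V) (K0 W \<circ> (Lop sc us vs W ^^ (n - 1))) p))"

end

theory Submission
  imports Defs
begin

text \<open>
  In the basis x, y of V(alpha), an operator on V (x) W is a 2x2 matrix of operators
  on W.  By the comultiplication, R acts on V (x) W as the lower triangular matrix with R on the
  diagonal and  B = u q^-1 alpha K0 + v q K1  below it; L acts as an upper triangular matrix with
  L on the diagonal and  u* K1 + v* q^2 alpha^-1 K0  above it.  The n-th power of such a matrix
  has A^n on the diagonal and  sum over i < n of A^(n-1-i) B A^i  off it.  Since K0 and K1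
  q-commute with R and L (K0 R = q^2 R K0, K1 R = q^-2 R K1, and similarly for L), every summand
  collapses to a power of q times A^(n-1) K (or K A^(n-1)), and the resulting geometric sums
  1 + q^2 + ... + q^(2(n-1)) equal q^(n-1) [n]_q.
\<close>

lemma qnum_inverse: "qnum (inverse q) n = qnum (q::'a::field) n"
  unfolding qnum_def by (simp add: divide_simps) (simp add: algebra_simps)

lemma qnum_geometric:
  fixes q :: "'a::field"
  assumes "q \<noteq> 0" "q ^ 2 \<noteq> 1"
  shows "qnum q (Suc m) * q ^ m = (\<Sum>i\<le>m. (q ^ 2) ^ i)"
proof -
  have "q - inverse q \<noteq> 0" "q ^ 2 - 1 \<noteq> 0" using assms by (auto simp: field_simps power2_eq_square)
  then have "qnum q (Suc m) * q ^ m = ((q ^ 2) ^ Suc m - 1) / (q ^ 2 - 1)"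
    using assms by (simp add: qnum_def field_simps power_mult[symmetric] power2_eq_square)
  also have "\<dots> = (\<Sum>i\<le>m. (q ^ 2) ^ i)"
    using assms geometric_sum[of "q ^ 2" "Suc m"] by (simp add: lessThan_Suc_atMost)
  finally show ?thesis .
qed

context vector_space
begin

lemma linear_funpow:
  assumes "Vector_Spaces.linear scale scale A"
  shows "Vector_Spaces.linear scale scale (A ^^ k)"
proof (induction k)
  case (Suc k)
  then show ?case using Vector_Spaces.linear_compose[OF Suc assms] by (simp add: o_def)
qed (simp add: linear_ident)

lemma funpow_push_right:
  assumes G: "Vector_Spaces.linear scale scale G"
    and comm: "\<And>w. F (G w) = c *s G (F w)"
  shows "F ((G ^^ i) w) = (c ^ i) *s (G ^^ i) (F w)"
proof (induction i)
  case (Suc i)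
  interpret G: Vector_Spaces.linear scale scale G by (fact G)
  show ?case by (simp add: comm Suc G.scale mult.commute)
qed simp

lemma funpow_push_left:
  assumes F: "Vector_Spaces.linear scale scale F"
    and comm: "\<And>w. F (G w) = c *s G (F w)"
  shows "(F ^^ i) (G w) = (c ^ i) *s G ((F ^^ i) w)"
proof (induction i)
  case (Suc i)
  interpret F: Vector_Spaces.linear scale scale F by (fact F)
  show ?case by (simp add: comm Suc F.scale mult.commute)
qed simp

lemma lower_triangular_funpow:
  assumes A: "Vector_Spaces.linear scale scale A"
    and T: "\<And>w1 w2. T (w1, w2) = (A w1, A w2 + B w1)"
  shows "(T ^^ Suc m) (w1, w2) =
    ((A ^^ Suc m) w1, (A ^^ Suc m) w2 + (\<Sum>i\<le>m. (A ^^ (m - i)) (B ((A ^^ i) w1))))"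
proof (induction m)
  case (Suc m)
  interpret A: Vector_Spaces.linear scale scale A by (fact A)
  have "A (\<Sum>i\<le>m. (A ^^ (m - i)) (B ((A ^^ i) w1))) = (\<Sum>i\<le>m. (A ^^ (Suc m - i)) (B ((A ^^ i) w1)))"
    by (auto simp: A.sum Suc_diff_le intro!: sum.cong)
  then show ?case
    using Suc by (simp add: T A.add add.assoc)
qed (simp add: T)

lemma upper_triangular_funpow:
  assumes A: "Vector_Spaces.linear scale scale A"
    and T: "\<And>w1 w2. T (w1, w2) = (A w1 + B w2, A w2)"
  shows "(T ^^ Suc m) (w1, w2) =
    ((A ^^ Suc m) w1 + (\<Sum>i\<le>m. (A ^^ (m - i)) (B ((A ^^ i) w2))), (A ^^ Suc m) w2)"
proof (induction m)
  case (Suc m)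
  interpret A: Vector_Spaces.linear scale scale A by (fact A)
  have "A (\<Sum>i\<le>m. (A ^^ (m - i)) (B ((A ^^ i) w2))) = (\<Sum>i\<le>m. (A ^^ (Suc m - i)) (B ((A ^^ i) w2)))"
    by (auto simp: A.sum Suc_diff_le intro!: sum.cong)
  then show ?case
    using Suc by (simp add: T A.add add.assoc)
qed (simp add: T)

lemma collapse_push_right:
  assumes A: "Vector_Spaces.linear scale scale A"
    and comm: "\<And>w. K (A w) = c *s A (K w)"
  shows "(\<Sum>i\<le>m. (A ^^ (m - i)) (K ((A ^^ i) w))) = (\<Sum>i\<le>m. c ^ i) *s (A ^^ m) (K w)"
proof -
  have "(A ^^ (m - i)) (K ((A ^^ i) w)) = (c ^ i) *s (A ^^ m) (K w)" if "i \<le> m" for i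
  proof -
    interpret P: Vector_Spaces.linear scale scale "A ^^ (m - i)" by (rule linear_funpow[OF A])
    have "(A ^^ (m - i)) ((A ^^ i) (K w)) = (A ^^ m) (K w)"
      using that funpow_add[of "m - i" i A, THEN fun_cong, of "K w"] by simp
    then show ?thesis by (simp add: funpow_push_right[where F = K and G = A, OF A comm] P.scale)
  qed
  then show ?thesis by (simp add: scale_sum_left)
qed

lemma collapse_push_left:
  assumes A: "Vector_Spaces.linear scale scale A"
    and comm: "\<And>w. A (K w) = c *s K (A w)"
  shows "(\<Sum>i\<le>m. (A ^^ (m - i)) (K ((A ^^ i) w))) = (\<Sum>i\<le>m. c ^ i) *s K ((A ^^ m) w)"
proof -
  have "(A ^^ (m - i)) (K ((A ^^ i) w)) = (c ^ (m - i)) *s K ((A ^^ m) w)" if "i \<le> m" for i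
    using that funpow_add[of "m - i" i A, THEN fun_cong, of w]
    by (simp add: funpow_push_left[where F = A and G = K, OF A comm])
  then have "(\<Sum>i\<le>m. (A ^^ (m - i)) (K ((A ^^ i) w))) = (\<Sum>i\<le>m. c ^ (m - i)) *s K ((A ^^ m) w)"
    by (simp add: scale_sum_left)
  also have "(\<Sum>i\<le>m. c ^ (m - i)) = (\<Sum>i\<le>m. c ^ i)"
    using sum.atLeastAtMost_rev[of "\<lambda>i. c ^ i" 0 m] by (simp add: atLeast0AtMost)
  finally show ?thesis .
qed

end

lemma linear_map_add: "Vector_Spaces.linear s1 s2 f \<Longrightarrow> f (x + y) = f x + f y"
  by (simp add: Vector_Spaces.linear_iff)

lemma linear_map_scale: "Vector_Spaces.linear s1 s2 f \<Longrightarrow> f (s1 c x) = s2 c (f x)"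
  by (simp add: Vector_Spaces.linear_iff)

lemma conjugation_commute:
  assumes "K \<circ> E \<circ> Ki = (\<lambda>w. sc c (E w))" and "Ki \<circ> K = id"
  shows "K (E w) = sc c (E (K w))"
  using fun_cong[OF assms(1), of "K w"] fun_cong[OF assms(2), of w] by simp

locale uq_module = vector_space sc for sc :: "'a::field \<Rightarrow> 'w::ab_group_add \<Rightarrow> 'w" +
  fixes q :: 'a and W :: "'w uqmod"
  assumes module: "is_uq_module sc q W" and q_nz: "q \<noteq> 0"
begin

lemma generators_linear:
  "Vector_Spaces.linear sc sc (E0p W)" "Vector_Spaces.linear sc sc (E0m W)"
  "Vector_Spaces.linear sc sc (E1p W)" "Vector_Spaces.linear sc sc (E1m W)"
  "Vector_Spaces.linear sc sc (K0 W)" "Vector_Spaces.linear sc sc (K1 W)"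
  using module unfolding is_uq_module_def by auto

lemmas generator_simps = generators_linear[THEN linear_map_add] generators_linear[THEN linear_map_scale]

lemma K_commute:
  "K0 W (E0p W w) = sc (q ^ 2) (E0p W (K0 W w))"
  "K0 W (E1m W w) = sc (q ^ 2) (E1m W (K0 W w))"
  "K0 W (E1p W w) = sc (inverse q ^ 2) (E1p W (K0 W w))"
  "K0 W (E0m W w) = sc (inverse q ^ 2) (E0m W (K0 W w))"
  "K1 W (E0p W w) = sc (inverse q ^ 2) (E0p W (K1 W w))"
  "K1 W (E1m W w) = sc (inverse q ^ 2) (E1m W (K1 W w))"
  "K1 W (E1p W w) = sc (q ^ 2) (E1p W (K1 W w))"
  "K1 W (E0m W w) = sc (q ^ 2) (E0m W (K1 W w))"
  "K0 W (K1 W w) = K1 W (K0 W w)"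
proof -
  have K0_inv: "K0i W \<circ> K0 W = id" and K1_inv: "K1i W \<circ> K1 W = id"
    and conj0: "K0 W \<circ> E0p W \<circ> K0i W = (\<lambda>w. sc (q ^ 2) (E0p W w))"
      "K0 W \<circ> E1m W \<circ> K0i W = (\<lambda>w. sc (q ^ 2) (E1m W w))"
      "K0 W \<circ> E1p W \<circ> K0i W = (\<lambda>w. sc (inverse q ^ 2) (E1p W w))"
      "K0 W \<circ> E0m W \<circ> K0i W = (\<lambda>w. sc (inverse q ^ 2) (E0m W w))"
    and conj1: "K1 W \<circ> E0p W \<circ> K1i W = (\<lambda>w. sc (inverse q ^ 2) (E0p W w))"
      "K1 W \<circ> E1m W \<circ> K1i W = (\<lambda>w. sc (inverse q ^ 2) (E1m W w))"
      "K1 W \<circ> E1p W \<circ> K1i W = (\<lambda>w. sc (q ^ 2) (E1p W w))"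
      "K1 W \<circ> E0m W \<circ> K1i W = (\<lambda>w. sc (q ^ 2) (E0m W w))"
    and K01: "K0 W \<circ> K1 W = K1 W \<circ> K0 W"
    using module unfolding is_uq_module_def by simp_all
  show "K0 W (E0p W w) = sc (q ^ 2) (E0p W (K0 W w))"
    "K0 W (E1m W w) = sc (q ^ 2) (E1m W (K0 W w))"
    "K0 W (E1p W w) = sc (inverse q ^ 2) (E1p W (K0 W w))"
    "K0 W (E0m W w) = sc (inverse q ^ 2) (E0m W (K0 W w))"
    using conj0[THEN conjugation_commute[where K = "K0 W" and Ki = "K0i W" and sc = sc], OF K0_inv] by simp_all
  show "K1 W (E0p W w) = sc (inverse q ^ 2) (E0p W (K1 W w))"
    "K1 W (E1m W w) = sc (inverse q ^ 2) (E1m W (K1 W w))"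
    "K1 W (E1p W w) = sc (q ^ 2) (E1p W (K1 W w))"
    "K1 W (E0m W w) = sc (q ^ 2) (E0m W (K1 W w))"
    using conj1[THEN conjugation_commute[where K = "K1 W" and Ki = "K1i W" and sc = sc], OF K1_inv] by simp_all
  show "K0 W (K1 W w) = K1 W (K0 W w)"
    using fun_cong[OF K01, of w] by simp
qed

lemma R_linear: "Vector_Spaces.linear sc sc (Rop sc u v W)"
  unfolding Rop_def Vector_Spaces.linear_iff
  using vector_space_axioms by (simp add: generator_simps scale_right_distrib mult.commute)

lemma L_linear: "Vector_Spaces.linear sc sc (Lop sc us vs W)"
  unfolding Lop_def Vector_Spaces.linear_iff
  using vector_space_axioms by (simp add: generator_simps scale_right_distrib mult.commute)

lemma K0_R: "K0 W (Rop sc u v W w) = sc (q ^ 2) (Rop sc u v W (K0 W w))"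
  unfolding Rop_def by (simp add: generator_simps K_commute scale_right_distrib mult.commute)

lemma K1_R: "K1 W (Rop sc u v W w) = sc (inverse q ^ 2) (Rop sc u v W (K1 W w))"
  unfolding Rop_def by (simp add: generator_simps K_commute scale_right_distrib mult.commute)

text \<open>Likewise for L, written with K moved to the left of L, as needed for L_n.\<close>
lemma L_K1: "Lop sc us vs W (K1 W w) = sc (inverse q ^ 2) (K1 W (Lop sc us vs W w))"
proof -
  have "K1 W (Lop sc us vs W w) = sc (q ^ 2) (Lop sc us vs W (K1 W w))"
    unfolding Lop_def by (simp add: generator_simps K_commute scale_right_distrib mult.commute)
  then show ?thesis using q_nz by (simp add: power_inverse)
qed

lemma L_K0: "Lop sc us vs W (K0 W w) = sc (q ^ 2) (K0 W (Lop sc us vs W w))"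
proof -
  have "K0 W (Lop sc us vs W w) = sc (inverse q ^ 2) (Lop sc us vs W (K0 W w))"
    unfolding Lop_def by (simp add: generator_simps K_commute scale_right_distrib mult.commute)
  then show ?thesis using q_nz by (simp add: power_inverse)
qed

lemma R_on_tensor:
  "Rop (vwscale sc) u v (tens_mod sc (stdV q \<alpha>) W) (w1, w2) =
     (Rop sc u v W w1,
      Rop sc u v W w2 + (sc (u * (inverse q * \<alpha>)) (K0 W w1) + sc (v * q) (K1 W w1)))"
  unfolding Rop_def tens_mod_def stdV_def tensor_def vwscale_def
  by (simp add: generator_simps algebra_simps q_nz)

lemma L_on_tensor:
  "Lop (vwscale sc) us vs (tens_mod sc (stdV q \<alpha>) W) (w1, w2) =
     (Lop sc us vs W w1 + (sc us (K1 W w2) + sc (vs * (q ^ 2 * inverse \<alpha>)) (K0 W w2)),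
      Lop sc us vs W w2)"
  unfolding Lop_def tens_mod_def stdV_def tensor_def vwscale_def
  by (simp add: generator_simps algebra_simps q_nz power2_eq_square)

text \<open>Closed form of R^(m+1) on V(alpha) (x) W: the off-diagonal sum collapses by the
  q-commutation of R with K0, K1 and sums to [m+1]_q times the coefficients of R_(m+1).\<close>
lemma R_tensor_power:
  assumes q_sq: "q ^ 2 \<noteq> 1"
  shows "(Rop (vwscale sc) u v (tens_mod sc (stdV q \<alpha>) W) ^^ Suc m) (w1, w2) =
    ((Rop sc u v W ^^ Suc m) w1,
     (Rop sc u v W ^^ Suc m) w2 + sc (qnum q (Suc m))
        (sc (u * q ^ m * (inverse q * \<alpha>)) ((Rop sc u v W ^^ m) (K0 W w1))
         + sc (v * inverse q ^ m * q) ((Rop sc u v W ^^ m) (K1 W w1))))"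
proof -
  let ?R = "Rop sc u v W" and ?a = "u * (inverse q * \<alpha>)" and ?b = "v * q"
  have Rk: "Vector_Spaces.linear sc sc (?R ^^ k)" for k by (rule linear_funpow[OF R_linear])
  have "(\<Sum>i\<le>m. (?R ^^ (m - i)) (sc ?a (K0 W ((?R ^^ i) w1)) + sc ?b (K1 W ((?R ^^ i) w1))))
      = sc ?a (\<Sum>i\<le>m. (?R ^^ (m - i)) (K0 W ((?R ^^ i) w1)))
        + sc ?b (\<Sum>i\<le>m. (?R ^^ (m - i)) (K1 W ((?R ^^ i) w1)))"
    by (simp add: Rk[THEN linear_map_add] Rk[THEN linear_map_scale] sum.distrib scale_sum_right)
  also have "\<dots> = sc ?a (sc (\<Sum>i\<le>m. (q ^ 2) ^ i) ((?R ^^ m) (K0 W w1)))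
        + sc ?b (sc (\<Sum>i\<le>m. (inverse q ^ 2) ^ i) ((?R ^^ m) (K1 W w1)))"
    by (simp add: collapse_push_right[where K = "K0 W", OF R_linear K0_R] collapse_push_right[where K = "K1 W", OF R_linear K1_R])
  also have "\<dots> = sc (qnum q (Suc m))
        (sc (u * q ^ m * (inverse q * \<alpha>)) ((?R ^^ m) (K0 W w1))
         + sc (v * inverse q ^ m * q) ((?R ^^ m) (K1 W w1)))"
    using qnum_geometric[OF q_nz q_sq, of m] qnum_geometric[of "inverse q" m] q_nz q_sq
    by (simp add: qnum_inverse power_inverse scale_right_distrib mult_ac flip: power_mult_distrib)
  finally show ?thesis
    by (simp only: lower_triangular_funpow[OF R_linear R_on_tensor])
qed

lemma L_tensor_power:
  assumes q_sq: "q ^ 2 \<noteq> 1"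
  shows "(Lop (vwscale sc) us vs (tens_mod sc (stdV q \<alpha>) W) ^^ Suc m) (w1, w2) =
    ((Lop sc us vs W ^^ Suc m) w1 + sc (qnum q (Suc m))
        (sc (us * inverse q ^ m) (K1 W ((Lop sc us vs W ^^ m) w2))
         + sc (vs * q ^ m * (q ^ 2 * inverse \<alpha>)) (K0 W ((Lop sc us vs W ^^ m) w2))),
     (Lop sc us vs W ^^ Suc m) w2)"
proof -
  let ?L = "Lop sc us vs W" and ?c = "vs * (q ^ 2 * inverse \<alpha>)"
  have Lk: "Vector_Spaces.linear sc sc (?L ^^ k)" for k by (rule linear_funpow[OF L_linear])
  have "(\<Sum>i\<le>m. (?L ^^ (m - i)) (sc us (K1 W ((?L ^^ i) w2)) + sc ?c (K0 W ((?L ^^ i) w2))))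
      = sc us (\<Sum>i\<le>m. (?L ^^ (m - i)) (K1 W ((?L ^^ i) w2)))
        + sc ?c (\<Sum>i\<le>m. (?L ^^ (m - i)) (K0 W ((?L ^^ i) w2)))"
    by (simp add: Lk[THEN linear_map_add] Lk[THEN linear_map_scale] sum.distrib scale_sum_right)
  also have "\<dots> = sc us (sc (\<Sum>i\<le>m. (inverse q ^ 2) ^ i) (K1 W ((?L ^^ m) w2)))
        + sc ?c (sc (\<Sum>i\<le>m. (q ^ 2) ^ i) (K0 W ((?L ^^ m) w2)))"
    by (simp add: collapse_push_left[where K = "K1 W", OF L_linear L_K1]
                  collapse_push_left[where K = "K0 W", OF L_linear L_K0])
  also have "\<dots> = sc (qnum q (Suc m))
        (sc (us * inverse q ^ m) (K1 W ((?L ^^ m) w2))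
         + sc (vs * q ^ m * (q ^ 2 * inverse \<alpha>)) (K0 W ((?L ^^ m) w2)))"
    using qnum_geometric[OF q_nz q_sq, of m] qnum_geometric[of "inverse q" m] q_nz q_sq
    by (simp add: qnum_inverse power_inverse scale_right_distrib mult_ac flip: power_mult_distrib)
  finally show ?thesis
    by (simp only: upper_triangular_funpow[OF L_linear L_on_tensor])
qed

end

theorem lemma7p10:
  fixes q \<alpha> b c bs cs u v us vs :: "'a::field"
    and sc :: "'a \<Rightarrow> 'w::ab_group_add \<Rightarrow> 'w"
    and W :: "'w uqmod"
    and n :: nat
  assumes alg_closed: "\<forall>p::'a poly. 0 < degree p \<longrightarrow> (\<exists>x. poly p x = 0)"
    and q_nz: "q \<noteq> 0" and q_sq: "q ^ 2 \<noteq> 1"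
    and alpha_nz: "\<alpha> \<noteq> 0"
    and b_nz: "b \<noteq> 0" and c_nz: "c \<noteq> 0" and bs_nz: "bs \<noteq> 0" and cs_nz: "cs \<noteq> 0"
    and uvs: "u * vs = - b * bs * inverse q * (q - inverse q) ^ 2"
    and vus: "v * us = - c * cs * inverse q * (q - inverse q) ^ 2"
    and vs_W: "Vector_Spaces.vector_space sc"
    and mod_W: "is_uq_module sc q W"
    and n_pos: "1 \<le> n"
  shows "Rop (vwscale sc) u v (tens_mod sc (stdV q \<alpha>) W) ^^ n
           = (\<lambda>p. tensor sc id (Rop sc u v W ^^ n) p
                  + vwscale sc (qnum q n) (Rn sc q u v (stdV q \<alpha>) W n p))
       \<and> Lop (vwscale sc) us vs (tens_mod sc (stdV q \<alpha>) W) ^^ n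
           = (\<lambda>p. tensor sc id (Lop sc us vs W ^^ n) p
                  + vwscale sc (qnum q n) (Ln sc q us vs (stdV q \<alpha>) W n p))"
proof -
  interpret uq_module sc q W
    using vs_W mod_W q_nz by (simp add: uq_module_def uq_module_axioms_def)
  obtain m where n: "n = Suc m" using n_pos by (cases n) auto
  show ?thesis
  proof (intro conjI ext)
    fix p :: "'w \<times> 'w"
    obtain w1 w2 where p: "p = (w1, w2)" by (cases p)
    show "(Rop (vwscale sc) u v (tens_mod sc (stdV q \<alpha>) W) ^^ n) p
       = tensor sc id (Rop sc u v W ^^ n) p + vwscale sc (qnum q n) (Rn sc q u v (stdV q \<alpha>) W n p)"
      unfolding p n R_tensor_power[OF q_sq]
      by (simp add: tensor_def Rn_def stdV_def vwscale_def scale_right_distrib ac_simps)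
    show "(Lop (vwscale sc) us vs (tens_mod sc (stdV q \<alpha>) W) ^^ n) p
       = tensor sc id (Lop sc us vs W ^^ n) p + vwscale sc (qnum q n) (Ln sc q us vs (stdV q \<alpha>) W n p)"
      unfolding p n L_tensor_power[OF q_sq]
      by (simp add: tensor_def Ln_def stdV_def vwscale_def scale_right_distrib power2_eq_square ac_simps)
  qed
qed

end
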